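(* Let $\mathcal{T}=(\mathbb{K}_i,\phi_i)_{i=0,\dots,m}$ be a tower with $\mathbb{K}_0=\emptyset$ whose maps are elementary inclusions or elementary contractions, named according to the naming convention below, and let $\hat{\mathbb{K}}_0,\dots,\hat{\mathbb{K}}_m$ be the active small coning construction. For every $i\in\{0,\dots,m\}$, the set of vertices of $\mathbb{K}_i$ equals the set of active vertices of $\hat{\mathbb{K}}_i$.
   Context: Elementary inclusion: $\mathbb{K}_{i+1}=\mathbb{K}_i\cup\{\sigma\}$, $\sigma\notin\mathbb{K}_i$, $\phi_i$ the inclusion. Elementary contraction of distinct vertices $u,v$ of $\mathbb{K}_i$: for one of them, say $v$, the vertex set of $\mathbb{K}_{i+1}$ is that of $\mathbb{K}_i$ minus $v$, $\phi_i(u)=\phi_i(v)=u$, and $\phi_i$ is the identity on other vertices. Active small coning construction: $\hat{\mathbb{K}}_0=\emptyset$; vertices flagged active/inactive, a simplex is active iff all its vertices are; $\mathrm{Act}\overline{\mathrm{St}}(w,\hat{\mathbb{K}}_i)$ = active simplices of $\hat{\mathbb{K}}_i$ in the closed star of $w$. Inclusion of $\sigma$: $\hat{\mathbb{K}}_{i+1}=\hat{\mathbb{K}}_i\cup\{\sigma\}$, a new vertex marked active. Contraction of $u,v$: if $|\mathrm{Act}\overline{\mathrm{St}}(u,\hat{\mathbb{K}}_i)|\le|\mathrm{Act}\overline{\mathrm{St}}(v,\hat{\mathbb{K}}_i)|$, $\hat{\mathbb{K}}_{i+1}=\hat{\mathbb{K}}_i\cup\{\{v\}\cup\tau:\tau\in\mathrm{Act}\overline{\mathrm{St}}(u,\hat{\mathbb{K}}_i)\}$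 and $u$ is marked inactive; otherwise the same with $u$ and $v$ exchanged. Naming convention: each contraction maps $u$ and $v$ to the vertex not marked inactive in that step. *)

theory Defs
  imports Main
begin

definition simplicial_complex :: "'v set set \<Rightarrow> bool" where
  "simplicial_complex K \<longleftrightarrow>
     (\<forall>\<sigma>\<in>K. finite \<sigma> \<and> \<sigma> \<noteq> {} \<and> (\<forall>\<tau>. \<tau> \<subseteq> \<sigma> \<and> \<tau> \<noteq> {} \<longrightarrow> \<tau> \<in> K))"

definition vertices :: "'v set set \<Rightarrow> 'v set" where
  "vertices K = {w. {w} \<in> K}"

text \<open>Active vertices of a complex H whose vertex flags are given by the set A
  of vertices flagged active.\<close>
definition active_vertices :: "'v set set \<Rightarrow> 'v set \<Rightarrow> 'v set" where
  "active_vertices H A = {w. {w} \<in> H \<and> w \<in> A}"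

definition closed_star :: "'v \<Rightarrow> 'v set set \<Rightarrow> 'v set set" where
  "closed_star w H = {\<tau>\<in>H. \<exists>\<sigma>\<in>H. w \<in> \<sigma> \<and> \<tau> \<subseteq> \<sigma>}"

text \<open>Active simplices of the closed star (a simplex is active iff all its vertices are).\<close>
definition act_star :: "'v \<Rightarrow> 'v set set \<Rightarrow> 'v set \<Rightarrow> 'v set set" where
  "act_star w H A = {\<tau>\<in>closed_star w H. \<tau> \<subseteq> A}"

text \<open>Elementary inclusion of \<sigma>, together with the corresponding step of the active
  small coning construction (H, A) \<mapsto> (H', A').\<close>
definition incl_step ::
  "'v set set \<Rightarrow> 'v set set \<Rightarrow> 'v set \<Rightarrow> 'v set \<Rightarrow> ('v \<Rightarrow> 'v)
   \<Rightarrow> 'v set set \<Rightarrow> 'v set set \<Rightarrow> 'v set \<Rightarrow> bool" where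
  "incl_step K H A \<sigma> \<phi> K' H' A' \<longleftrightarrow>
     \<sigma> \<notin> K \<and> simplicial_complex (insert \<sigma> K) \<and>
     \<phi> = id \<and> K' = insert \<sigma> K \<and>
     H' = insert \<sigma> H \<and>
     A' = (if card \<sigma> = 1 then A \<union> \<sigma> else A)"

text \<open>Elementary contraction of u, v, with the naming convention: both are mapped to
  the vertex which is not marked inactive in the coning step.\<close>
definition contr_step ::
  "'v set set \<Rightarrow> 'v set set \<Rightarrow> 'v set \<Rightarrow> 'v \<Rightarrow> 'v \<Rightarrow> ('v \<Rightarrow> 'v)
   \<Rightarrow> 'v set set \<Rightarrow> 'v set set \<Rightarrow> 'v set \<Rightarrow> bool" where
  "contr_step K H A u v \<phi> K' H' A' \<longleftrightarrow>
     u \<noteq> v \<and> u \<in> vertices K \<and> v \<in> vertices K \<and>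
     (if card (act_star u H A) \<le> card (act_star v H A) then
        H' = H \<union> {insert v \<tau> | \<tau>. \<tau> \<in> act_star u H A} \<and> A' = A - {u} \<and>
        \<phi> = (\<lambda>x. if x = u then v else x)
      else
        H' = H \<union> {insert u \<tau> | \<tau>. \<tau> \<in> act_star v H A} \<and> A' = A - {v} \<and>
        \<phi> = (\<lambda>x. if x = v then u else x)) \<and>
     K' = image \<phi> ` K"

definition elem_step ::
  "'v set set \<Rightarrow> 'v set set \<Rightarrow> 'v set \<Rightarrow> ('v \<Rightarrow> 'v)
   \<Rightarrow> 'v set set \<Rightarrow> 'v set set \<Rightarrow> 'v set \<Rightarrow> bool" where
  "elem_step K H A \<phi> K' H' A' \<longleftrightarrow>
     (\<exists>\<sigma>. incl_step K H A \<sigma> \<phi> K' H' A') \<or>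
     (\<exists>u v. contr_step K H A u v \<phi> K' H' A')"

end

theory Submission
  imports Defs
begin

text \<open>The invariant carried along the tower is that K i is a simplicial complex whose vertices
  are the active vertices of the coned complex. An inclusion adds a vertex to both sides exactly
  when the new simplex is a singleton. A contraction of u into v removes u from the vertices of
  K i (every vertex of the image complex is the image of a vertex, since simplices are closed
  under faces) and marks u inactive, while the cones it adds to the coned complex can only create
  the singleton {v}, and v is already an active vertex.\<close>

lemma simplicial_complex_image:
  assumes "simplicial_complex K"
  shows "simplicial_complex ((`) f ` K)"
  unfolding simplicial_complex_def
proof (intro ballI conjI allI impI)
  fix \<rho> assume "\<rho> \<in> (`) f ` K"
  then obtain \<sigma> where \<sigma>: "\<sigma> \<in> K" and \<rho>: "\<rho> = f ` \<sigma>" by blast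
  have fin: "finite \<sigma>" and ne: "\<sigma> \<noteq> {}"
    and faces: "\<And>\<tau>. \<tau> \<subseteq> \<sigma> \<Longrightarrow> \<tau> \<noteq> {} \<Longrightarrow> \<tau> \<in> K"
    using assms \<sigma> unfolding simplicial_complex_def by blast+
  show "finite \<rho>" "\<rho> \<noteq> {}" using \<rho> fin ne by simp_all
  fix \<tau> assume \<tau>: "\<tau> \<subseteq> \<rho> \<and> \<tau> \<noteq> {}"
  have "\<tau> = f ` (\<sigma> \<inter> f -` \<tau>)" using \<tau> \<rho> by blast
  moreover have "\<sigma> \<inter> f -` \<tau> \<noteq> {}" using \<tau> \<rho> by blast
  ultimately show "\<tau> \<in> (`) f ` K" using faces by blast
qed

lemma vertices_image:
  assumes "simplicial_complex K"
  shows "vertices ((`) f ` K) = f ` vertices K"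
proof
  show "vertices ((`) f ` K) \<subseteq> f ` vertices K"
  proof
    fix w assume "w \<in> vertices ((`) f ` K)"
    then have "{w} \<in> (`) f ` K" by (simp add: vertices_def)
    then obtain \<sigma> where \<sigma>: "\<sigma> \<in> K" "f ` \<sigma> = {w}" by (metis imageE)
    then obtain x where x: "x \<in> \<sigma>" "f x = w" by blast
    have "{x} \<subseteq> \<sigma>" "{x} \<noteq> {}" using x(1) by simp_all
    then have "{x} \<in> K" using assms \<sigma>(1) unfolding simplicial_complex_def by blast
    then show "w \<in> f ` vertices K" using x(2) unfolding vertices_def by blast
  qed
  show "f ` vertices K \<subseteq> vertices ((`) f ` K)"
  proof
    fix w assume "w \<in> f ` vertices K"
    then obtain x where x: "{x} \<in> K" "w = f x" by (auto simp: vertices_def)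
    from x(1) have "f ` {x} \<in> (`) f ` K" by (rule imageI)
    then show "w \<in> vertices ((`) f ` K)" using x(2) by (simp add: vertices_def)
  qed
qed

lemma vertices_insert:
  "vertices (insert \<sigma> K) = (if card \<sigma> = 1 then vertices K \<union> \<sigma> else vertices K)"
  by (auto simp: vertices_def card_1_singleton_iff)

lemma active_vertices_insert:
  "active_vertices (insert \<sigma> H) (if card \<sigma> = 1 then A \<union> \<sigma> else A)
     = (if card \<sigma> = 1 then active_vertices H A \<union> \<sigma> else active_vertices H A)"
  by (auto simp: active_vertices_def card_1_singleton_iff)

lemma active_vertices_cone:
  assumes "b \<in> active_vertices H A"
  shows "active_vertices (H \<union> {insert b \<tau> | \<tau>. \<tau> \<in> S}) (A - {a}) = active_vertices H A - {a}"
  using assms unfolding active_vertices_def by (auto simp: insert_eq_iff)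

lemma contraction_vertices_eq_active:
  assumes "simplicial_complex K" "vertices K = active_vertices H A"
    and "a \<noteq> b" "b \<in> vertices K"
  shows "vertices ((`) (\<lambda>x. if x = a then b else x) ` K)
           = active_vertices (H \<union> {insert b \<tau> | \<tau>. \<tau> \<in> S}) (A - {a})"
proof -
  have "(\<lambda>x. if x = a then b else x) ` vertices K = vertices K - {a}"
    using assms(3,4) by auto
  moreover have "active_vertices (H \<union> {insert b \<tau> | \<tau>. \<tau> \<in> S}) (A - {a}) = vertices K - {a}"
    using assms(2,4) by (simp add: active_vertices_cone)
  ultimately show ?thesis
    by (simp only: vertices_image[OF assms(1)])
qed

lemma elem_step_vertices_eq_active:
  assumes "elem_step K H A \<phi> K' H' A'"
    and "simplicial_complex K" "vertices K = active_vertices H A"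
  shows "simplicial_complex K' \<and> vertices K' = active_vertices H' A'"
  using assms(1) unfolding elem_step_def
proof (elim disjE exE)
  fix \<sigma> assume "incl_step K H A \<sigma> \<phi> K' H' A'"
  then have "simplicial_complex (insert \<sigma> K)" "K' = insert \<sigma> K" "H' = insert \<sigma> H"
    "A' = (if card \<sigma> = 1 then A \<union> \<sigma> else A)"
    by (simp_all add: incl_step_def)
  then show ?thesis
    using assms(3) by (simp only: vertices_insert active_vertices_insert)
next
  fix u v assume contr: "contr_step K H A u v \<phi> K' H' A'"
  then have uv: "u \<noteq> v" "u \<in> vertices K" "v \<in> vertices K" and K': "K' = (`) \<phi> ` K"
    by (auto simp: contr_step_def)
  have "simplicial_complex K'"
    using K' simplicial_complex_image[OF assms(2)] by simp
  moreover have "vertices K' = active_vertices H' A'"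
  proof (cases "card (act_star u H A) \<le> card (act_star v H A)")
    case True
    with contr have "H' = H \<union> {insert v \<tau> | \<tau>. \<tau> \<in> act_star u H A}" "A' = A - {u}"
      "\<phi> = (\<lambda>x. if x = u then v else x)"
      by (simp_all add: contr_step_def)
    then show ?thesis
      using K' uv contraction_vertices_eq_active[OF assms(2,3)] by simp
  next
    case False
    with contr have "H' = H \<union> {insert u \<tau> | \<tau>. \<tau> \<in> act_star v H A}" "A' = A - {v}"
      "\<phi> = (\<lambda>x. if x = v then u else x)"
      by (simp_all add: contr_step_def)
    then show ?thesis
      using K' uv contraction_vertices_eq_active[OF assms(2,3)] by simp
  qed
  ultimately show ?thesis ..
qed

theorem lemma3:
  fixes K H :: "nat \<Rightarrow> 'v set set" and A :: "nat \<Rightarrow> 'v set"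
    and \<phi> :: "nat \<Rightarrow> 'v \<Rightarrow> 'v" and m :: nat
  assumes "K 0 = {}" and "H 0 = {}" and "A 0 = {}"
    and "\<forall>i<m. elem_step (K i) (H i) (A i) (\<phi> i) (K (Suc i)) (H (Suc i)) (A (Suc i))"
  shows "\<forall>i\<le>m. vertices (K i) = active_vertices (H i) (A i)"
proof -
  have "simplicial_complex (K i) \<and> vertices (K i) = active_vertices (H i) (A i)" if "i \<le> m" for i
    using that
  proof (induction i)
    case 0
    then show ?case
      using assms(1-3) by (simp add: simplicial_complex_def vertices_def active_vertices_def)
  next
    case (Suc i)
    then have "elem_step (K i) (H i) (A i) (\<phi> i) (K (Suc i)) (H (Suc i)) (A (Suc i))"
      using assms(4) by simp
    with Suc show ?case by (simp add: elem_step_vertices_eq_active)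
  qed
  then show ?thesis by blast
qed

end
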